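(* Two factor sets of an ACI-matrix over a field $\mathbb{F}$ cannot be disjoint.
   Context: Let $\mathbb{F}$ be a field. An ACI-matrix is a matrix with entries in $\mathbb{F}[x_1,\dots,x_k]$ whose entries are polynomials of degree at most one and such that no indeterminate appears in two different columns. A completion is an assignment of values in $\mathbb{F}$ to all indeterminates; $\mathrm{maxRank}(N)$ is the maximum rank of a completion. ACI-matrices (and blocks) of size $0\times q$ ($q>0$, wide degenerate), $p\times 0$ ($p>0$, tall degenerate) and $0\times0$ (void) are allowed. $N$ is FRmR if $\mathrm{maxRank}(N)=\mathrm{rows}(N)$, FCmR if $\mathrm{maxRank}(N)=\mathrm{cols}(N)$; by convention tall degenerate is FRmR, wide degenerate is FCmR, void is both. For an $m\times n$ block matrix $\begin{bmatrix} A & B\\ 0 & C\end{bmatrix}$ with lower-left $r\times s$ zero block, the zero block is Big if $r+s>\max\{m,n\}$. For $F=\{f_1<\dots<f_s\}\subseteq\{1,\dots,n\}$ with complement $\{g_1<\dots<g_{n-s}\}$, $Q_F$ is the $n\times n$ permutation matrix such that $MQ_F$ has as columns $f_1,\dots,f_s,g_1,\dots,g_{n-s}$ of $M$ in that order. For an $m\times n$ ACI-matrix $M$, $F$ is a factor set of $M$ if there is a nonsingular constant $m\times m$ matrix $R$ with $RMQ_F=\begin{bmatrix} A & B\\ 0 & C\end{bmatrix}$, where $A$ has $\#F$ columns, the zero block is Big, $A$ is FRmR and $C$ is FCmR. *)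

theory Defs
  imports "Jordan_Normal_Form.DL_Rank"
begin

text \<open>An entry of an ACI-matrix in F[x_0,...,x_(k-1)] is a polynomial of degree at most one,
  represented as a pair (c, a): the polynomial c + sum_(v<k) a v * x_v.
  Coefficients a v for v >= k are required to vanish (see aci_matrix).\<close>
type_synonym 'a aff = "'a \<times> (nat \<Rightarrow> 'a)"

definition appears :: "nat \<Rightarrow> 'a::zero aff \<Rightarrow> bool" where
  "appears v e \<longleftrightarrow> snd e v \<noteq> 0"

definition aci_matrix :: "nat \<Rightarrow> 'a::zero aff mat \<Rightarrow> bool" where
  "aci_matrix k M \<longleftrightarrow>
     (\<forall>i < dim_row M. \<forall>j < dim_col M. \<forall>v. appears v (M $$ (i,j)) \<longrightarrow> v < k) \<and>
     (\<forall>v i j i' j'. i < dim_row M \<longrightarrow> j < dim_col M \<longrightarrow> i' < dim_row M \<longrightarrow> j' < dim_col M \<longrightarrow>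
        appears v (M $$ (i,j)) \<longrightarrow> appears v (M $$ (i',j')) \<longrightarrow> j = j')"

definition aff_eval :: "nat \<Rightarrow> (nat \<Rightarrow> 'a::comm_ring_1) \<Rightarrow> 'a aff \<Rightarrow> 'a" where
  "aff_eval k t e = fst e + (\<Sum>v<k. snd e v * t v)"

definition completion :: "nat \<Rightarrow> (nat \<Rightarrow> 'a::comm_ring_1) \<Rightarrow> 'a aff mat \<Rightarrow> 'a mat" where
  "completion k t M = map_mat (aff_eval k t) M"

definition maxRank :: "nat \<Rightarrow> 'a::field aff mat \<Rightarrow> nat" where
  "maxRank k M = Max {vec_space.rank (dim_row M) (completion k t M) | t. True}"

text \<open>Conventions: tall degenerate (p x 0, p>0) is FRmR, wide degenerate (0 x q, q>0) is FCmR,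
  void is both.\<close>
definition FRmR :: "nat \<Rightarrow> 'a::field aff mat \<Rightarrow> bool" where
  "FRmR k N \<longleftrightarrow> dim_col N = 0 \<or> maxRank k N = dim_row N"

definition FCmR :: "nat \<Rightarrow> 'a::field aff mat \<Rightarrow> bool" where
  "FCmR k N \<longleftrightarrow> dim_row N = 0 \<or> maxRank k N = dim_col N"

definition aff_lmult :: "'a::comm_ring_1 mat \<Rightarrow> 'a aff mat \<Rightarrow> 'a aff mat" where
  "aff_lmult R M = mat (dim_row R) (dim_col M) (\<lambda>(i,j).
     ((\<Sum>l<dim_col R. R $$ (i,l) * fst (M $$ (l,j))),
      (\<lambda>v. \<Sum>l<dim_col R. R $$ (i,l) * snd (M $$ (l,j)) v)))"

definition aff_rmult :: "'a aff mat \<Rightarrow> 'a::comm_ring_1 mat \<Rightarrow> 'a aff mat" where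
  "aff_rmult M Q = mat (dim_row M) (dim_col Q) (\<lambda>(i,j).
     ((\<Sum>l<dim_col M. fst (M $$ (i,l)) * Q $$ (l,j)),
      (\<lambda>v. \<Sum>l<dim_col M. snd (M $$ (i,l)) v * Q $$ (l,j))))"

text \<open>Column indices are 0-based. col_order n F = [f_1,...,f_s,g_1,...,g_(n-s)].\<close>
definition col_order :: "nat \<Rightarrow> nat set \<Rightarrow> nat list" where
  "col_order n F = sorted_list_of_set F @ sorted_list_of_set ({0..<n} - F)"

text \<open>Q_F: the n x n permutation matrix such that column j of M Q_F is column (col_order n F ! j) of M.\<close>
definition perm_Q :: "nat \<Rightarrow> nat set \<Rightarrow> 'a::comm_ring_1 mat" where
  "perm_Q n F = mat n n (\<lambda>(i,j). if i = col_order n F ! j then 1 else 0)"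

definition zero_aff :: "'a::zero aff \<Rightarrow> bool" where
  "zero_aff e \<longleftrightarrow> fst e = 0 \<and> (\<forall>v. snd e v = 0)"

text \<open>F is a factor set of the m x n ACI-matrix M: there is a nonsingular constant R with
  R M Q_F = [A B; 0 C], A having #F columns (and p rows), the (m-p) x #F zero block Big,
  A FRmR and C FCmR.\<close>
definition factor_set :: "nat \<Rightarrow> 'a::field aff mat \<Rightarrow> nat set \<Rightarrow> bool" where
  "factor_set k M F \<longleftrightarrow> F \<subseteq> {0..<dim_col M} \<and>
    (\<exists>R p. R \<in> carrier_mat (dim_row M) (dim_row M) \<and> invertible_mat R \<and> p \<le> dim_row M \<and>
      (let N = aff_rmult (aff_lmult R M) (perm_Q (dim_col M) F);
           m = dim_row M; n = dim_col M; s = card F; r = m - p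
       in (\<forall>i j. p \<le> i \<longrightarrow> i < m \<longrightarrow> j < s \<longrightarrow> zero_aff (N $$ (i,j))) \<and>
          r + s > max m n \<and>
          FRmR k (mat p s (\<lambda>(i,j). N $$ (i,j))) \<and>
          FCmR k (mat r (n - s) (\<lambda>(i,j). N $$ (p + i, s + j)))))"

end

theory Submission
  imports Defs
begin

(*
  Let F1, F2 be factor sets with R_i M Q_(F_i) = [A_i B_i; 0 C_i], the zero block being
  r_i x s_i.  Bigness gives r_2 + s_2 > m: in every completion X, the columns of R_2 X indexed
  by F_2 vanish outside the first m - r_2 < s_2 rows, so X has a nonzero kernel vector supported
  in F_2.  Bigness also gives r_1 + s_1 > n, so C_1 is not wide degenerate and, being FCmR, has
  a completion of full column rank; for that completion the columns of X outside F_1 are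
  independent, because R_1 X maps a vector vanishing on F_1 into the rows of C_1.  Hence F_2
  cannot lie outside F_1.
*)

lemma (in vec_space) non_distinct_cols_low_rank:
  assumes A: "A \<in> carrier_mat n nc" and "\<not> distinct (cols A)"
  shows "rank A < nc"
proof -
  let ?indpt = "\<lambda>T. T \<subseteq> set (cols A) \<and> lin_indpt T"
  obtain S where S: "maximal S ?indpt"
    using maximal_exists[of ?indpt "card (set (cols A))" "{}"]
    by (meson List.finite_set card_mono empty_iff empty_subsetI finite_lin_indpt2 rev_finite_subset)
  have "card S \<le> card (set (cols A))" using S by (simp add: card_mono maximal_def)
  also have "\<dots> < length (cols A)"
    using \<open>\<not> distinct (cols A)\<close> card_distinct card_length nat_less_le by blast
  finally show ?thesis using rank_card_indpt[OF A S] A by simp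
qed

lemma (in vec_space) full_rank_mult_vec_eq_0:
  assumes A: "A \<in> carrier_mat n nc" and "rank A = nc"
    and v: "v \<in> carrier_vec nc" and "A *\<^sub>v v = 0\<^sub>v n"
  shows "v = 0\<^sub>v nc"
proof (rule ccontr)
  assume "v \<noteq> 0\<^sub>v nc"
  have "distinct (cols A)" using non_distinct_cols_low_rank[OF A] \<open>rank A = nc\<close> by auto
  then show False
    using lin_depI[OF A v \<open>v \<noteq> 0\<^sub>v nc\<close> \<open>A *\<^sub>v v = 0\<^sub>v n\<close>] full_rank_lin_indpt[OF A \<open>rank A = nc\<close>]
    by blast
qed

lemma wide_mat_kernel_nonzero:
  fixes B :: "'a::field mat"
  assumes B: "B \<in> carrier_mat p s" and "p < s"
  obtains y where "y \<in> carrier_vec s" "y \<noteq> 0\<^sub>v s" "B *\<^sub>v y = 0\<^sub>v p"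
proof -
  define A where "A = mat\<^sub>r s s (\<lambda>i. if i = s - 1 then 0\<^sub>v s else vec s (\<lambda>j. if i < p then B $$ (i,j) else 0))"
  have A: "A \<in> carrier_mat s s" unfolding A_def by simp
  have "det A = 0" unfolding A_def by (rule det_row_0) (use \<open>p < s\<close> in auto)
  then obtain y where y: "y \<in> carrier_vec s" "y \<noteq> 0\<^sub>v s" "A *\<^sub>v y = 0\<^sub>v s"
    using det_0_iff_vec_prod_zero_field[OF A] by blast
  have "row A i = row B i" if "i < p" for i
    using that \<open>p < s\<close> B unfolding A_def by (intro eq_vecI) auto
  moreover have "(A *\<^sub>v y) $ i = 0" if "i < p" for i
    using y(3) that \<open>p < s\<close> by simp
  ultimately have "B *\<^sub>v y = 0\<^sub>v p"
    using \<open>p < s\<close> A B by (intro eq_vecI) auto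
  with y that show thesis by blast
qed

lemma invertible_mat_mult_vec_eq_0_iff:
  fixes R :: "'a::field mat"
  assumes R: "R \<in> carrier_mat m m" "invertible_mat R" and u: "u \<in> carrier_vec m"
  shows "R *\<^sub>v u = 0\<^sub>v m \<longleftrightarrow> u = 0\<^sub>v m"
proof
  assume "R *\<^sub>v u = 0\<^sub>v m"
  obtain B where BR: "B * R = 1\<^sub>m (dim_row B)" and RB: "R * B = 1\<^sub>m m"
    using R unfolding invertible_mat_def inverts_mat_def by auto
  have "dim_row B = m" using arg_cong[OF BR, of dim_col] R by simp
  moreover have "dim_col B = m" using arg_cong[OF RB, of dim_col] by simp
  ultimately have B: "B \<in> carrier_mat m m" "B * R = 1\<^sub>m m" using BR by auto
  have "u = (B * R) *\<^sub>v u" using B u by simp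
  also have "\<dots> = B *\<^sub>v (R *\<^sub>v u)" by (rule assoc_mult_mat_vec[OF B(1) R(1) u])
  also have "\<dots> = 0\<^sub>v m" using \<open>R *\<^sub>v u = 0\<^sub>v m\<close> B by (intro eq_vecI) auto
  finally show "u = 0\<^sub>v m" .
qed (use R in \<open>intro eq_vecI, auto\<close>)

lemma mult_invertible_kernel_iff:
  fixes R :: "'a::field mat"
  assumes R: "R \<in> carrier_mat m m" "invertible_mat R"
    and X: "X \<in> carrier_mat m n" and Q: "Q \<in> carrier_mat n n" and y: "y \<in> carrier_vec n"
  shows "(R * X * Q) *\<^sub>v y = 0\<^sub>v m \<longleftrightarrow> X *\<^sub>v (Q *\<^sub>v y) = 0\<^sub>v m"
proof -
  have "(R * X * Q) *\<^sub>v y = (R * X) *\<^sub>v (Q *\<^sub>v y)"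
    using R X Q y by (intro assoc_mult_mat_vec) auto
  also have "\<dots> = R *\<^sub>v (X *\<^sub>v (Q *\<^sub>v y))"
    using R X Q y by (intro assoc_mult_mat_vec) auto
  finally show ?thesis using invertible_mat_mult_vec_eq_0_iff[OF R] X Q y by simp
qed

lemma zero_block_kernel_nonzero:
  fixes Y :: "'a::field mat"
  assumes Y: "Y \<in> carrier_mat m n" and "p < s" "s \<le> n"
    and zero: "\<And>i j. p \<le> i \<Longrightarrow> i < m \<Longrightarrow> j < s \<Longrightarrow> Y $$ (i,j) = 0"
  obtains y where "y \<in> carrier_vec n" "y \<noteq> 0\<^sub>v n" "\<And>j. s \<le> j \<Longrightarrow> j < n \<Longrightarrow> y $ j = 0"
    "Y *\<^sub>v y = 0\<^sub>v m"
proof -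
  let ?B = "mat p s (\<lambda>(i,j). Y $$ (i,j))"
  obtain x where x: "x \<in> carrier_vec s" "x \<noteq> 0\<^sub>v s" "?B *\<^sub>v x = 0\<^sub>v p"
    using wide_mat_kernel_nonzero[of ?B p s] \<open>p < s\<close> by auto
  define y where "y = vec n (\<lambda>j. if j < s then x $ j else 0)"
  have y: "y \<in> carrier_vec n" unfolding y_def by simp
  have row_sum: "(Y *\<^sub>v y) $ i = (\<Sum>j\<in>{0..<s}. Y $$ (i,j) * x $ j)" if "i < m" for i
  proof -
    have "(Y *\<^sub>v y) $ i = (\<Sum>j\<in>{0..<n}. Y $$ (i,j) * y $ j)"
      using that Y y by (simp add: scalar_prod_def)
    also have "\<dots> = (\<Sum>j\<in>{0..<s}. Y $$ (i,j) * x $ j)"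
      using \<open>s \<le> n\<close> by (intro sum.mono_neutral_cong_right) (auto simp: y_def)
    finally show ?thesis .
  qed
  have kernel: "Y *\<^sub>v y = 0\<^sub>v m"
  proof (rule eq_vecI)
    fix i assume "i < dim_vec (0\<^sub>v m :: 'a vec)"
    then have i: "i < m" by simp
    show "(Y *\<^sub>v y) $ i = 0\<^sub>v m $ i"
    proof (cases "i < p")
      case True
      have "(\<Sum>j\<in>{0..<s}. Y $$ (i,j) * x $ j) = (?B *\<^sub>v x) $ i"
        using x(1) True by (simp add: scalar_prod_def)
      also have "\<dots> = 0" using x(3) True by simp
      finally show ?thesis using row_sum[OF i] i by simp
    qed (use row_sum zero i in simp)
  qed (use Y in simp)
  have x_y: "x $ j = y $ j" if "j < s" for j using that \<open>s \<le> n\<close> by (simp add: y_def)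
  have nonzero: "y \<noteq> 0\<^sub>v n"
  proof
    assume "y = 0\<^sub>v n"
    then have "x = 0\<^sub>v s" using x(1) x_y \<open>s \<le> n\<close> by (intro eq_vecI) auto
    with x(2) show False ..
  qed
  have support: "y $ j = 0" if "s \<le> j" "j < n" for j
    using that by (simp add: y_def)
  show thesis by (rule that[OF y nonzero support kernel])
qed

lemma full_rank_block_kernel_trivial:
  fixes Y :: "'a::field mat"
  assumes Y: "Y \<in> carrier_mat m n" and "p \<le> m" "s \<le> n"
    and rank: "vec_space.rank (m - p) (mat (m - p) (n - s) (\<lambda>(i,j). Y $$ (p + i, s + j))) = n - s"
    and w: "w \<in> carrier_vec n" and low: "\<And>j. j < s \<Longrightarrow> w $ j = 0" and "Y *\<^sub>v w = 0\<^sub>v m"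
  shows "w = 0\<^sub>v n"
proof -
  let ?C = "mat (m - p) (n - s) (\<lambda>(i,j). Y $$ (p + i, s + j))"
  define w' where "w' = vec (n - s) (\<lambda>j. w $ (s + j))"
  have "?C *\<^sub>v w' = 0\<^sub>v (m - p)"
  proof (rule eq_vecI)
    fix i assume "i < dim_vec (0\<^sub>v (m - p) :: 'a vec)"
    then have i: "p + i < m" using \<open>p \<le> m\<close> by simp
    have "(?C *\<^sub>v w') $ i = (\<Sum>j\<in>{0..<n - s}. Y $$ (p + i, j + s) * w $ (j + s))"
      using i by (simp add: scalar_prod_def w'_def add.commute[of s])
    also have "\<dots> = (\<Sum>j\<in>{s..<n}. Y $$ (p + i, j) * w $ j)"
      using sum.shift_bounds_nat_ivl[of "\<lambda>j. Y $$ (p + i, j) * w $ j" 0 s "n - s"] \<open>s \<le> n\<close> by simp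
    also have "\<dots> = (\<Sum>j\<in>{0..<n}. Y $$ (p + i, j) * w $ j)"
      using low by (intro sum.mono_neutral_left) auto
    also have "\<dots> = (Y *\<^sub>v w) $ (p + i)"
      using i Y w by (simp add: scalar_prod_def)
    finally show "(?C *\<^sub>v w') $ i = 0\<^sub>v (m - p) $ i"
      using \<open>Y *\<^sub>v w = 0\<^sub>v m\<close> i by simp
  qed simp
  then have "w' = 0\<^sub>v (n - s)"
    by (intro vec_space.full_rank_mult_vec_eq_0[OF _ rank]) (auto simp: w'_def)
  show ?thesis
  proof (rule eq_vecI)
    fix j assume "j < dim_vec (0\<^sub>v n :: 'a vec)"
    then have j: "j < n" by simp
    show "w $ j = 0\<^sub>v n $ j"
    proof (cases "j < s")
      case False
      then obtain l where "j = s + l" by (auto simp: not_less le_iff_add)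
      then have "w $ j = w' $ l" using j by (simp add: w'_def)
      then show ?thesis using \<open>w' = 0\<^sub>v (n - s)\<close> \<open>j = s + l\<close> j by simp
    qed (use low j in simp)
  qed (use w in simp)
qed

lemma card_atLeastLessThan_Diff:
  assumes "F \<subseteq> {0..<n}"
  shows "card ({0..<n} - F) = n - card F"
  using assms by (simp add: card_Diff_subset finite_subset)

lemma length_col_order: "F \<subseteq> {0..<n} \<Longrightarrow> length (col_order n F) = n"
  using card_mono[of "{0..<n}" F] finite_subset[of F "{0..<n}"]
  by (simp add: col_order_def card_atLeastLessThan_Diff)

lemma set_col_order: "F \<subseteq> {0..<n} \<Longrightarrow> set (col_order n F) = {0..<n}"
  unfolding col_order_def using finite_subset[of F "{0..<n}"] by auto

lemma distinct_col_order: "F \<subseteq> {0..<n} \<Longrightarrow> distinct (col_order n F)"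
  unfolding col_order_def using finite_subset[of F "{0..<n}"] by auto

lemma col_order_nth_mem_iff:
  assumes F: "F \<subseteq> {0..<n}" and "j < n"
  shows "col_order n F ! j \<in> F \<longleftrightarrow> j < card F"
proof -
  have fin: "finite F" using F finite_subset by blast
  let ?xs = "sorted_list_of_set F" and ?ys = "sorted_list_of_set ({0..<n} - F)"
  show ?thesis
  proof (cases "j < card F")
    case True
    then have "col_order n F ! j = ?xs ! j" by (simp add: col_order_def nth_append)
    moreover have "?xs ! j \<in> set ?xs" using True by (intro nth_mem) simp
    ultimately show ?thesis using True fin by simp
  next
    case False
    then have "col_order n F ! j = ?ys ! (j - card F)"
      by (simp add: col_order_def nth_append)
    moreover have "?ys ! (j - card F) \<in> set ?ys"
      using False \<open>j < n\<close> card_atLeastLessThan_Diff[OF F] by (intro nth_mem) simp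
    ultimately show ?thesis using False by simp
  qed
qed

lemma col_order_nth_less: "F \<subseteq> {0..<n} \<Longrightarrow> j < n \<Longrightarrow> col_order n F ! j < n"
  using set_col_order[of F n] length_col_order[of F n] nth_mem by fastforce

lemma col_order_nthE:
  assumes "F \<subseteq> {0..<n}" "i < n"
  obtains j where "j < n" "col_order n F ! j = i"
  using assms set_col_order[of F n] length_col_order[of F n] by (metis atLeastLessThan_iff in_set_conv_nth zero_le)

lemma perm_Q_carrier: "perm_Q n F \<in> carrier_mat n n"
  unfolding perm_Q_def by simp

lemma perm_Q_mult_vec_col_order:
  assumes F: "F \<subseteq> {0..<n}" and j: "j < n" and v: "v \<in> carrier_vec n"
  shows "(perm_Q n F *\<^sub>v v) $ (col_order n F ! j) = v $ j"
proof -
  let ?co = "col_order n F"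
  have "(perm_Q n F *\<^sub>v v) $ (?co ! j) = (\<Sum>l\<in>{0..<n}. (if ?co ! j = ?co ! l then 1 else 0) * v $ l)"
    using col_order_nth_less[OF F j] v unfolding perm_Q_def by (simp add: scalar_prod_def)
  also have "\<dots> = (\<Sum>l\<in>{0..<n}. if l = j then v $ j else 0)"
    using distinct_col_order[OF F] length_col_order[OF F] j
    by (intro sum.cong) (auto simp: nth_eq_iff_index_eq)
  also have "\<dots> = v $ j" using j by simp
  finally show ?thesis .
qed

lemma perm_Q_mult_vec_eq_0_iff:
  assumes F: "F \<subseteq> {0..<n}" and v: "v \<in> carrier_vec n"
  shows "perm_Q n F *\<^sub>v v = 0\<^sub>v n \<longleftrightarrow> v = 0\<^sub>v n"
proof
  assume Qv: "perm_Q n F *\<^sub>v v = 0\<^sub>v n"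
  show "v = 0\<^sub>v n"
  proof (rule eq_vecI)
    fix j assume "j < dim_vec (0\<^sub>v n :: 'a vec)"
    then have j: "j < n" by simp
    show "v $ j = 0\<^sub>v n $ j"
      using perm_Q_mult_vec_col_order[OF F j v] col_order_nth_less[OF F j] Qv j by simp
  qed (use v in simp)
qed (auto simp: perm_Q_def scalar_prod_def)

lemma perm_Q_mult_vec_reindex:
  assumes F: "F \<subseteq> {0..<n}" and z: "z \<in> carrier_vec n"
  shows "perm_Q n F *\<^sub>v vec n (\<lambda>j. z $ (col_order n F ! j)) = z"
proof (rule eq_vecI)
  fix i assume "i < dim_vec z"
  then obtain j where j: "j < n" and i: "col_order n F ! j = i" using z col_order_nthE[OF F] by auto
  show "(perm_Q n F *\<^sub>v vec n (\<lambda>j. z $ (col_order n F ! j))) $ i = z $ i"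
    using perm_Q_mult_vec_col_order[OF F j, of "vec n (\<lambda>j. z $ (col_order n F ! j))"] j
    unfolding i by (simp add: i)
qed (use z in \<open>simp add: perm_Q_def\<close>)

lemma dim_completion[simp]:
  "dim_row (completion k t M) = dim_row M" "dim_col (completion k t M) = dim_col M"
  unfolding completion_def by auto

lemma index_completion[simp]:
  "i < dim_row M \<Longrightarrow> j < dim_col M \<Longrightarrow> completion k t M $$ (i,j) = aff_eval k t (M $$ (i,j))"
  unfolding completion_def by auto

lemma aff_eval_zero_aff: "zero_aff e \<Longrightarrow> aff_eval k t e = 0"
  by (simp add: zero_aff_def aff_eval_def)

lemma completion_aff_lmult:
  assumes R: "R \<in> carrier_mat m (dim_row M)"
  shows "completion k t (aff_lmult R M) = R * completion k t M"
proof (rule eq_matI)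
  fix i j assume "i < dim_row (R * completion k t M)" "j < dim_col (R * completion k t M)"
  then have i: "i < m" and j: "j < dim_col M" using R by auto
  let ?m' = "dim_row M"
  have "completion k t (aff_lmult R M) $$ (i,j) =
     (\<Sum>l<?m'. R $$ (i,l) * fst (M $$ (l,j))) + (\<Sum>v<k. (\<Sum>l<?m'. R $$ (i,l) * snd (M $$ (l,j)) v) * t v)"
    using i j R unfolding completion_def aff_lmult_def aff_eval_def by auto
  also have "\<dots> = (\<Sum>l<?m'. R $$ (i,l) * (fst (M $$ (l,j)) + (\<Sum>v<k. snd (M $$ (l,j)) v * t v)))"
    by (simp add: sum_distrib_left sum_distrib_right sum.distrib algebra_simps sum.swap[of _ "{..<k}"])
  also have "\<dots> = (R * completion k t M) $$ (i,j)"
    using i j R by (auto simp: scalar_prod_def aff_eval_def lessThan_atLeast0 intro!: sum.cong)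
  finally show "completion k t (aff_lmult R M) $$ (i,j) = (R * completion k t M) $$ (i,j)" .
qed (use R in \<open>auto simp: aff_lmult_def\<close>)

lemma completion_aff_rmult:
  assumes Q: "Q \<in> carrier_mat (dim_col M) q"
  shows "completion k t (aff_rmult M Q) = completion k t M * Q"
proof (rule eq_matI)
  fix i j assume "i < dim_row (completion k t M * Q)" "j < dim_col (completion k t M * Q)"
  then have i: "i < dim_row M" and j: "j < q" using Q by auto
  let ?n' = "dim_col M"
  have "completion k t (aff_rmult M Q) $$ (i,j) =
     (\<Sum>l<?n'. fst (M $$ (i,l)) * Q $$ (l,j)) + (\<Sum>v<k. (\<Sum>l<?n'. snd (M $$ (i,l)) v * Q $$ (l,j)) * t v)"
    using i j Q unfolding completion_def aff_rmult_def aff_eval_def by auto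
  also have "\<dots> = (\<Sum>l<?n'. (fst (M $$ (i,l)) + (\<Sum>v<k. snd (M $$ (i,l)) v * t v)) * Q $$ (l,j))"
    by (simp add: sum_distrib_left sum_distrib_right sum.distrib algebra_simps sum.swap[of _ "{..<k}"])
  also have "\<dots> = (completion k t M * Q) $$ (i,j)"
    using i j Q by (auto simp: scalar_prod_def aff_eval_def lessThan_atLeast0 intro!: sum.cong)
  finally show "completion k t (aff_rmult M Q) $$ (i,j) = (completion k t M * Q) $$ (i,j)" .
qed (use Q in \<open>auto simp: aff_rmult_def\<close>)

lemma maxRank_attained:
  obtains t where "vec_space.rank (dim_row N) (completion k t N) = maxRank k N"
proof -
  let ?ranks = "{vec_space.rank (dim_row N) (completion k t N) | t. True}"
  have "?ranks \<subseteq> {0..dim_col N}"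
    using vec_space.rank_le_nc[of "completion k _ N" "dim_row N" "dim_col N"] by fastforce
  then have "Max ?ranks \<in> ?ranks" by (intro Max_in) (auto intro: finite_subset)
  then show thesis using that unfolding maxRank_def by auto
qed

lemma factor_setE:
  assumes "factor_set k M F"
  obtains R p where "F \<subseteq> {0..<dim_col M}" "R \<in> carrier_mat (dim_row M) (dim_row M)" "invertible_mat R"
    "p \<le> dim_row M"
    "\<And>i j. p \<le> i \<Longrightarrow> i < dim_row M \<Longrightarrow> j < card F \<Longrightarrow>
        zero_aff (aff_rmult (aff_lmult R M) (perm_Q (dim_col M) F) $$ (i,j))"
    "dim_row M - p + card F > max (dim_row M) (dim_col M)"
    "FCmR k (mat (dim_row M - p) (dim_col M - card F) (\<lambda>(i,j).
        aff_rmult (aff_lmult R M) (perm_Q (dim_col M) F) $$ (p + i, card F + j)))"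
  using assms unfolding factor_set_def Let_def by blast

lemma completion_factor_form:
  assumes "R \<in> carrier_mat (dim_row M) (dim_row M)"
  shows "completion k t (aff_rmult (aff_lmult R M) (perm_Q (dim_col M) F))
    = R * completion k t M * perm_Q (dim_col M) F"
proof -
  have "completion k t (aff_rmult (aff_lmult R M) (perm_Q (dim_col M) F))
      = completion k t (aff_lmult R M) * perm_Q (dim_col M) F"
    by (rule completion_aff_rmult[where q = "dim_col M"]) (simp add: aff_lmult_def perm_Q_carrier)
  then show ?thesis using completion_aff_lmult[OF assms] by simp
qed

lemma factor_set_completion_zero_block:
  fixes M :: "'a::field aff mat"
  assumes "factor_set k M F"
  obtains R p where "F \<subseteq> {0..<dim_col M}" "R \<in> carrier_mat (dim_row M) (dim_row M)" "invertible_mat R"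
    "p < card F"
    "\<And>i j. p \<le> i \<Longrightarrow> i < dim_row M \<Longrightarrow> j < card F \<Longrightarrow>
        (R * completion k t M * perm_Q (dim_col M) F) $$ (i,j) = 0"
proof -
  define m n where "m = dim_row M" and "n = dim_col M"
  obtain R p where F: "F \<subseteq> {0..<n}" and R: "R \<in> carrier_mat m m" "invertible_mat R"
    and "p \<le> m"
    and zero: "\<And>i j. p \<le> i \<Longrightarrow> i < m \<Longrightarrow> j < card F \<Longrightarrow>
        zero_aff (aff_rmult (aff_lmult R M) (perm_Q n F) $$ (i,j))"
    and big: "m - p + card F > max m n"
    using factor_setE[OF assms] unfolding m_def n_def by metis
  let ?N = "aff_rmult (aff_lmult R M) (perm_Q n F)"
  have N: "dim_row ?N = m" "dim_col ?N = n"
    using R(1) by (auto simp: aff_rmult_def aff_lmult_def perm_Q_def)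
  have "(R * completion k t M * perm_Q n F) $$ (i,j) = 0" if "p \<le> i" "i < m" "j < card F" for i j
  proof -
    have "j < n" using that card_mono[OF _ F] by simp
    have "(R * completion k t M * perm_Q n F) $$ (i,j) = completion k t ?N $$ (i,j)"
      using completion_factor_form[of R M k t F] R(1) unfolding m_def n_def by simp
    also have "\<dots> = aff_eval k t (?N $$ (i,j))" using that N \<open>j < n\<close> by simp
    also have "\<dots> = 0" by (rule aff_eval_zero_aff[OF zero[OF that]])
    finally show ?thesis .
  qed
  moreover have "p < card F" using big \<open>p \<le> m\<close> by linarith
  ultimately show thesis using that F R unfolding m_def n_def by blast
qed

lemma factor_set_completion_full_rank_block:
  fixes M :: "'a::field aff mat"
  assumes "factor_set k M F"
  obtains R p t where "F \<subseteq> {0..<dim_col M}" "R \<in> carrier_mat (dim_row M) (dim_row M)" "invertible_mat R"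
    "p \<le> dim_row M"
    "vec_space.rank (dim_row M - p) (mat (dim_row M - p) (dim_col M - card F)
        (\<lambda>(i,j). (R * completion k t M * perm_Q (dim_col M) F) $$ (p + i, card F + j)))
      = dim_col M - card F"
proof -
  define m n s where "m = dim_row M" and "n = dim_col M" and "s = card F"
  obtain R p where F: "F \<subseteq> {0..<n}" and R: "R \<in> carrier_mat m m" "invertible_mat R"
    and "p \<le> m" and big: "m - p + s > max m n"
    and FC: "FCmR k (mat (m - p) (n - s) (\<lambda>(i,j).
        aff_rmult (aff_lmult R M) (perm_Q n F) $$ (p + i, s + j)))"
    using factor_setE[OF assms] unfolding m_def n_def s_def by metis
  define N where "N = aff_rmult (aff_lmult R M) (perm_Q n F)"
  define C where "C = mat (m - p) (n - s) (\<lambda>(i,j). N $$ (p + i, s + j))"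
  have N: "dim_row N = m" "dim_col N = n"
    using R(1) by (auto simp: N_def aff_rmult_def aff_lmult_def perm_Q_def)
  have "s \<le> n" unfolding s_def using card_mono[OF _ F] by simp
  then have "m - p \<noteq> 0" using big by linarith
  then have "maxRank k C = n - s" using FC unfolding FCmR_def C_def N_def by simp
  then obtain t where rank: "vec_space.rank (m - p) (completion k t C) = n - s"
    using maxRank_attained[of C k] unfolding C_def by auto
  have "completion k t C = mat (m - p) (n - s) (\<lambda>(i,j). completion k t N $$ (p + i, s + j))"
    using N \<open>p \<le> m\<close> \<open>s \<le> n\<close> unfolding C_def by (intro eq_matI) auto
  also have "completion k t N = R * completion k t M * perm_Q n F"
    using completion_factor_form R(1) unfolding N_def m_def n_def by blast
  finally show thesis using that F R \<open>p \<le> m\<close> rank unfolding m_def n_def s_def by metis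
qed

lemma factor_set_cols_dependent:
  fixes M :: "'a::field aff mat"
  assumes "factor_set k M F"
  obtains z where "z \<in> carrier_vec (dim_col M)" "z \<noteq> 0\<^sub>v (dim_col M)"
    "\<And>j. j < dim_col M \<Longrightarrow> j \<notin> F \<Longrightarrow> z $ j = 0" "completion k t M *\<^sub>v z = 0\<^sub>v (dim_row M)"
proof -
  define m n where "m = dim_row M" and "n = dim_col M"
  obtain R p where F: "F \<subseteq> {0..<n}" and R: "R \<in> carrier_mat m m" "invertible_mat R"
    and "p < card F"
    and zero: "\<And>i j. p \<le> i \<Longrightarrow> i < m \<Longrightarrow> j < card F \<Longrightarrow>
        (R * completion k t M * perm_Q n F) $$ (i,j) = 0"
    using factor_set_completion_zero_block[OF assms] unfolding m_def n_def by metis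
  define X where "X = completion k t M"
  define Q :: "'a mat" where "Q = perm_Q n F"
  have X: "X \<in> carrier_mat m n" and Q: "Q \<in> carrier_mat n n"
    unfolding X_def Q_def m_def n_def by (auto simp: perm_Q_carrier)
  have "card F \<le> n" using card_mono[OF _ F] by simp
  then obtain y where y: "y \<in> carrier_vec n" "y \<noteq> 0\<^sub>v n"
    and y_support: "\<And>j. card F \<le> j \<Longrightarrow> j < n \<Longrightarrow> y $ j = 0" and "(R * X * Q) *\<^sub>v y = 0\<^sub>v m"
    using zero_block_kernel_nonzero[of "R * X * Q" m n p "card F"] R X Q \<open>p < card F\<close> zero
    unfolding X_def Q_def by auto
  define z where "z = Q *\<^sub>v y"
  have "z \<in> carrier_vec n" unfolding z_def using Q y by simp
  moreover have "X *\<^sub>v z = 0\<^sub>v m"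
    using mult_invertible_kernel_iff[OF R X Q y(1)] \<open>(R * X * Q) *\<^sub>v y = 0\<^sub>v m\<close> unfolding z_def by simp
  moreover have "z \<noteq> 0\<^sub>v n"
    using perm_Q_mult_vec_eq_0_iff[OF F y(1)] y(2) unfolding z_def Q_def by simp
  moreover have "z $ j = 0" if "j < n" "j \<notin> F" for j
  proof -
    obtain l where l: "l < n" "col_order n F ! l = j" using col_order_nthE[OF F \<open>j < n\<close>] .
    then have "card F \<le> l" using col_order_nth_mem_iff[OF F] \<open>j \<notin> F\<close> by force
    then show ?thesis
      using perm_Q_mult_vec_col_order[OF F l(1) y(1)] y_support l unfolding z_def Q_def by simp
  qed
  ultimately show thesis using that unfolding X_def m_def n_def by blast
qed

lemma factor_set_complement_cols_independent:
  fixes M :: "'a::field aff mat"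
  assumes "factor_set k M F"
  obtains t where "\<And>z. z \<in> carrier_vec (dim_col M) \<Longrightarrow> (\<And>j. j \<in> F \<Longrightarrow> z $ j = 0) \<Longrightarrow>
    completion k t M *\<^sub>v z = 0\<^sub>v (dim_row M) \<Longrightarrow> z = 0\<^sub>v (dim_col M)"
proof -
  define m n s where "m = dim_row M" and "n = dim_col M" and "s = card F"
  obtain R p t where F: "F \<subseteq> {0..<n}" and R: "R \<in> carrier_mat m m" "invertible_mat R"
    and "p \<le> m"
    and rank: "vec_space.rank (m - p) (mat (m - p) (n - s)
        (\<lambda>(i,j). (R * completion k t M * perm_Q n F) $$ (p + i, s + j))) = n - s"
    using factor_set_completion_full_rank_block[OF assms] unfolding m_def n_def s_def by metis
  define X where "X = completion k t M"
  define Q :: "'a mat" where "Q = perm_Q n F"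
  have X: "X \<in> carrier_mat m n" and Q: "Q \<in> carrier_mat n n"
    unfolding X_def Q_def m_def n_def by (auto simp: perm_Q_carrier)
  have "s \<le> n" unfolding s_def using card_mono[OF _ F] by simp
  show thesis
  proof (rule that)
    fix z assume z: "z \<in> carrier_vec (dim_col M)" and z_F: "\<And>j. j \<in> F \<Longrightarrow> z $ j = 0"
      and "completion k t M *\<^sub>v z = 0\<^sub>v (dim_row M)"
    define w where "w = vec n (\<lambda>j. z $ (col_order n F ! j))"
    have w: "w \<in> carrier_vec n" unfolding w_def by simp
    have Qw: "Q *\<^sub>v w = z" unfolding w_def Q_def using perm_Q_mult_vec_reindex[OF F] z n_def by simp
    then have "(R * X * Q) *\<^sub>v w = 0\<^sub>v m"
      using mult_invertible_kernel_iff[OF R X Q w] \<open>completion k t M *\<^sub>v z = 0\<^sub>v (dim_row M)\<close>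
      unfolding X_def m_def by simp
    moreover have "w $ j = 0" if "j < s" for j
      using that z_F col_order_nth_mem_iff[OF F, of j] \<open>s \<le> n\<close> unfolding w_def s_def by simp
    ultimately have "w = 0\<^sub>v n"
      using full_rank_block_kernel_trivial[of "R * X * Q" m n p s] R X Q \<open>p \<le> m\<close> \<open>s \<le> n\<close> rank w
      unfolding X_def Q_def by auto
    then show "z = 0\<^sub>v (dim_col M)"
      using perm_Q_mult_vec_eq_0_iff[OF F w] Qw unfolding Q_def n_def by simp
  qed
qed

theorem lemma5p1:
  fixes M :: "'a::field aff mat" and k :: nat and F1 F2 :: "nat set"
  assumes "aci_matrix k M"
    and "factor_set k M F1"
    and "factor_set k M F2"
  shows "F1 \<inter> F2 \<noteq> {}"
proof
  assume disjoint: "F1 \<inter> F2 = {}"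
  obtain t where injective: "\<And>z. z \<in> carrier_vec (dim_col M) \<Longrightarrow> (\<And>j. j \<in> F1 \<Longrightarrow> z $ j = 0) \<Longrightarrow>
      completion k t M *\<^sub>v z = 0\<^sub>v (dim_row M) \<Longrightarrow> z = 0\<^sub>v (dim_col M)"
    using factor_set_complement_cols_independent[OF assms(2)] by blast
  obtain z where z: "z \<in> carrier_vec (dim_col M)" "z \<noteq> 0\<^sub>v (dim_col M)"
    and z_F2: "\<And>j. j < dim_col M \<Longrightarrow> j \<notin> F2 \<Longrightarrow> z $ j = 0"
    and kernel: "completion k t M *\<^sub>v z = 0\<^sub>v (dim_row M)"
    using factor_set_cols_dependent[OF assms(3), where t = t] by blast
  have "F1 \<subseteq> {0..<dim_col M}" using assms(2) unfolding factor_set_def by blast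
  then have "z $ j = 0" if "j \<in> F1" for j using that disjoint by (intro z_F2) auto
  then show False using injective[OF z(1) _ kernel] z(2) by blast
qed

end
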